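(* Let $\Gamma$ be a connected graph and let $\rho,\sigma$ be equivalent frameworks of the cone graph $\Gamma*\{c\}$ in $\mathbb M^{d+1}$, with $\rho$ in general position. If $\rho$ is upper coned, then $\sigma$ is either upper coned or lower coned.
   Context: Minkowski space $\mathbb M^{d+1}$ is $\mathbb R^{d+1}$ with squared length $|x|^2=-x_1^2+\sum_{i=2}^{d+1}x_i^2$. The cone graph $\Gamma*\{c\}$ adds a new vertex $c$ to $\Gamma$ joined by an edge to every vertex of $\Gamma$. Frameworks are equivalent if $|\rho(t)-\rho(u)|^2=|\sigma(t)-\sigma(u)|^2$ for all edges. General position means every set of at most $d+2$ of the points is affinely independent. $\rho$ is upper coned if for all $t\in\mathcal V(\Gamma)$, $|\rho(t)-\rho(c)|^2<0$ and $(\rho(t)-\rho(c))_1>0$; lower coned if $|\rho(t)-\rho(c)|^2<0$ and $(\rho(t)-\rho(c))_1<0$ for all $t\in\mathcal V(\Gamma)$. *)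

theory Defs
  imports "HOL-Analysis.Analysis"
begin

text \<open>Minkowski space M^(d+1) is modelled as real \<times> 'a, where the first
  component is the time coordinate x_1 and 'a is Euclidean d-space, d = DIM('a).\<close>

definition mink_sq :: "real \<times> 'a::euclidean_space \<Rightarrow> real" where
  "mink_sq x = (snd x \<bullet> snd x) - (fst x) ^ 2"

definition is_graph :: "'v set \<Rightarrow> ('v \<Rightarrow> 'v \<Rightarrow> bool) \<Rightarrow> bool" where
  "is_graph V E \<longleftrightarrow> finite V \<and> (\<forall>u v. E u v \<longrightarrow> u \<in> V \<and> v \<in> V \<and> u \<noteq> v \<and> E v u)"

definition graph_connected :: "'v set \<Rightarrow> ('v \<Rightarrow> 'v \<Rightarrow> bool) \<Rightarrow> bool" where
  "graph_connected V E \<longleftrightarrow> V \<noteq> {} \<and>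
     (\<forall>u\<in>V. \<forall>v\<in>V. (u, v) \<in> {(x, y). x \<in> V \<and> y \<in> V \<and> E x y}\<^sup>*)"

text \<open>Cone graph \<Gamma> * {c}: vertices are Some t (t \<in> V) and the cone vertex None.\<close>
definition cone_vertices :: "'v set \<Rightarrow> 'v option set" where
  "cone_vertices V = insert None (Some ` V)"

fun cone_edge :: "'v set \<Rightarrow> ('v \<Rightarrow> 'v \<Rightarrow> bool) \<Rightarrow> 'v option \<Rightarrow> 'v option \<Rightarrow> bool" where
  "cone_edge V E (Some t) (Some u) = E t u"
| "cone_edge V E (Some t) None = (t \<in> V)"
| "cone_edge V E None (Some u) = (u \<in> V)"
| "cone_edge V E None None = False"

definition equivalent_frameworks ::
  "'w set \<Rightarrow> ('w \<Rightarrow> 'w \<Rightarrow> bool) \<Rightarrow> ('w \<Rightarrow> real \<times> 'a::euclidean_space) \<Rightarrow> ('w \<Rightarrow> real \<times> 'a) \<Rightarrow> bool" where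
  "equivalent_frameworks W F \<rho> \<sigma> \<longleftrightarrow>
     (\<forall>t\<in>W. \<forall>u\<in>W. F t u \<longrightarrow> mink_sq (\<rho> t - \<rho> u) = mink_sq (\<sigma> t - \<sigma> u))"

definition general_position :: "'w set \<Rightarrow> ('w \<Rightarrow> real \<times> 'a::euclidean_space) \<Rightarrow> bool" where
  "general_position W \<rho> \<longleftrightarrow>
     (\<forall>S\<subseteq>W. card S \<le> DIM('a) + 2 \<longrightarrow> inj_on \<rho> S \<and> \<not> affine_dependent (\<rho> ` S))"

definition upper_coned :: "'v set \<Rightarrow> ('v option \<Rightarrow> real \<times> 'a::euclidean_space) \<Rightarrow> bool" where
  "upper_coned V \<rho> \<longleftrightarrow> (\<forall>t\<in>V. mink_sq (\<rho> (Some t) - \<rho> None) < 0 \<and> fst (\<rho> (Some t) - \<rho> None) > 0)"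

definition lower_coned :: "'v set \<Rightarrow> ('v option \<Rightarrow> real \<times> 'a::euclidean_space) \<Rightarrow> bool" where
  "lower_coned V \<rho> \<longleftrightarrow> (\<forall>t\<in>V. mink_sq (\<rho> (Some t) - \<rho> None) < 0 \<and> fst (\<rho> (Some t) - \<rho> None) < 0)"

end

theory Submission
  imports Defs
begin

text \<open>Let \<open>c\<close> be the cone vertex. Every vector \<open>\<rho> t - \<rho> c\<close> is timelike, and for two
  timelike vectors the sign of their Minkowski inner product is the opposite of the sign
  of the product of their time coordinates (reverse Cauchy--Schwarz). The inner product of
  \<open>\<rho> t - \<rho> c\<close> and \<open>\<rho> u - \<rho> c\<close> is determined by the three squared lengths of the triangle
  \<open>c, t, u\<close>, so for every edge \<open>tu\<close> of \<open>\<Gamma>\<close> the framework \<open>\<sigma>\<close> puts \<open>\<sigma> t\<close> and \<open>\<sigma> u\<close> on the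
  same side of \<open>\<sigma> c\<close> in time. Connectedness of \<open>\<Gamma>\<close> propagates this to all vertices.\<close>

definition minkowski_inner :: "real \<times> 'a::euclidean_space \<Rightarrow> real \<times> 'a \<Rightarrow> real" where
  "minkowski_inner p q = snd p \<bullet> snd q - fst p * fst q"

lemma mink_sq_diff: "mink_sq (p - q) = mink_sq p + mink_sq q - 2 * minkowski_inner p q"
  unfolding mink_sq_def minkowski_inner_def
  by (simp add: inner_diff_left inner_diff_right inner_commute power2_eq_square algebra_simps)

lemma timelike_norm_less_abs_fst:
  assumes "mink_sq p < 0"
  shows "norm (snd p) < \<bar>fst p\<bar>"
proof -
  have "norm (snd p) ^ 2 < \<bar>fst p\<bar> ^ 2"
    using assms by (simp add: mink_sq_def power2_norm_eq_inner)
  then show ?thesis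
    using power2_less_imp_less by fastforce
qed

lemma timelike_minkowski_inner_neg_iff:
  assumes "mink_sq a < 0" "mink_sq b < 0"
  shows "minkowski_inner a b < 0 \<longleftrightarrow> fst a * fst b > 0"
proof -
  have "\<bar>snd a \<bullet> snd b\<bar> \<le> norm (snd a) * norm (snd b)"
    by (rule Cauchy_Schwarz_ineq2)
  also have "\<dots> < \<bar>fst a\<bar> * \<bar>fst b\<bar>"
    using timelike_norm_less_abs_fst[OF assms(1)] timelike_norm_less_abs_fst[OF assms(2)]
    by (meson mult_strict_mono' norm_ge_zero)
  finally have "\<bar>snd a \<bullet> snd b\<bar> < \<bar>fst a * fst b\<bar>"
    by (simp add: abs_mult)
  then show ?thesis
    unfolding minkowski_inner_def by linarith
qed

lemma timelike_triangle_same_orientation: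
  assumes "mink_sq a < 0" "mink_sq b < 0"
    and "mink_sq x = mink_sq a" "mink_sq y = mink_sq b" "mink_sq (x - y) = mink_sq (a - b)"
  shows "fst x * fst y > 0 \<longleftrightarrow> fst a * fst b > 0"
proof -
  have "minkowski_inner x y = minkowski_inner a b"
    using assms(3-5) mink_sq_diff[of x y] mink_sq_diff[of a b] by simp
  then show ?thesis
    using timelike_minkowski_inner_neg_iff assms by metis
qed

lemma graph_connected_edge_invariant:
  assumes "graph_connected V E" "\<And>t u. E t u \<Longrightarrow> P t \<longleftrightarrow> P u" "t \<in> V" "u \<in> V"
  shows "P t \<longleftrightarrow> P u"
proof -
  have "(t, u) \<in> {(x, y). x \<in> V \<and> y \<in> V \<and> E x y}\<^sup>*"
    using assms(1,3,4) unfolding graph_connected_def by blast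
  then show ?thesis
    by (induction rule: rtrancl_induct) (use assms(2) in auto)
qed

lemma equivalent_cone_frameworks_mink_sq:
  assumes "is_graph V E" "equivalent_frameworks (cone_vertices V) (cone_edge V E) \<rho> \<sigma>"
  shows "t \<in> V \<Longrightarrow> mink_sq (\<sigma> (Some t) - \<sigma> None) = mink_sq (\<rho> (Some t) - \<rho> None)"
    and "E t u \<Longrightarrow> mink_sq (\<sigma> (Some t) - \<sigma> (Some u)) = mink_sq (\<rho> (Some t) - \<rho> (Some u))"
  using assms unfolding equivalent_frameworks_def cone_vertices_def is_graph_def by auto

theorem mainTheorem19:
  fixes V :: "'v set" and E :: "'v \<Rightarrow> 'v \<Rightarrow> bool"
    and \<rho> \<sigma> :: "'v option \<Rightarrow> real \<times> 'a::euclidean_space"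
  assumes "is_graph V E"
    and "graph_connected V E"
    and "equivalent_frameworks (cone_vertices V) (cone_edge V E) \<rho> \<sigma>"
    and "general_position (cone_vertices V) \<rho>"
    and "upper_coned V \<rho>"
  shows "upper_coned V \<sigma> \<or> lower_coned V \<sigma>"
proof -
  define r where "r t = \<rho> (Some t) - \<rho> None" for t
  define s where "s t = \<sigma> (Some t) - \<sigma> None" for t
  note equiv = equivalent_cone_frameworks_mink_sq[OF assms(1,3), folded r_def s_def]
  have r_up: "mink_sq (r t) < 0" "fst (r t) > 0" if "t \<in> V" for t
    using assms(5) that unfolding upper_coned_def r_def by auto
  have s_timelike: "mink_sq (s t) < 0" if "t \<in> V" for t
    using equiv(1) r_up that by simp
  have "fst (s t) * fst (s u) > 0" if "E t u" for t u
  proof -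
    have "t \<in> V" "u \<in> V"
      using assms(1) that unfolding is_graph_def by auto
    moreover have "s t - s u = \<sigma> (Some t) - \<sigma> (Some u)" "r t - r u = \<rho> (Some t) - \<rho> (Some u)"
      unfolding s_def r_def by simp_all
    ultimately show ?thesis
      using timelike_triangle_same_orientation[of "r t" "r u" "s t" "s u"] r_up equiv that
      by simp
  qed
  then have "fst (s t) > 0 \<longleftrightarrow> fst (s u) > 0" if "t \<in> V" "u \<in> V" for t u
    using graph_connected_edge_invariant[OF assms(2) _ that, of "\<lambda>t. fst (s t) > 0"]
    by (metis mult_less_0_iff not_less_iff_gr_or_eq zero_less_mult_iff)
  moreover have "fst (s t) \<noteq> 0" if "t \<in> V" for t
    using timelike_norm_less_abs_fst[OF s_timelike[OF that]] by auto
  ultimately show ?thesis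
    using s_timelike unfolding upper_coned_def lower_coned_def s_def[symmetric]
    by (metis linorder_neqE_linordered_idom)
qed

end
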